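(* Let $d\geq 3$ and let $(M,g)$ be the Kasner spacetime $M=(0,\infty)\times\mathbb{R}^d$, $g=-dt^2+\sum_{i=1}^d t^{2p_i}\,dx_i^2$, with $\sum_i p_i=1$, $\sum_i p_i^2=1$ and at least one $p_i<0$. For every $\varepsilon>0$ there exists $T>0$ such that for every timelike curve $\gamma=(\gamma_t,\underline{\gamma}_1,\dots,\underline{\gamma}_d):I\to M$ for which there is some $s_0\in I$ with $\gamma_t(s_0)<T$, and for all $i\in\{1,\dots,d\}$ and all $s,\tilde s\in\gamma_t^{-1}((0,T])$, one has $|\underline{\gamma}_i(s)-\underline{\gamma}_i(\tilde s)|<\varepsilon$.
   Context: Points of $M$ are written $(t,x_1,\dots,x_d)$ and a curve $\gamma$ is written in components $\gamma(s)=(\gamma_t(s),\underline{\gamma}_1(s),\dots,\underline{\gamma}_d(s))$. Timelike curves are piecewise smooth with timelike tangents. *)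

theory Defs
  imports "HOL-Analysis.Analysis"
begin

definition kasner_g :: "('n::finite \<Rightarrow> real) \<Rightarrow> real \<Rightarrow> real \<Rightarrow> real^'n \<Rightarrow> real" where
  "kasner_g p t v0 v = - (v0^2) + (\<Sum>i\<in>UNIV. t powr (2 * p i) * (v $ i)^2)"

definition kasner_timelike :: "('n::finite \<Rightarrow> real) \<Rightarrow> real \<Rightarrow> real \<Rightarrow> real^'n \<Rightarrow> bool" where
  "kasner_timelike p t v0 v \<longleftrightarrow> kasner_g p t v0 v < 0"

text \<open>I is an interval, gamma is continuous, and off a finite set S of break points it is
  differentiable (one-sided at endpoints of I) with continuous derivative (vt, vx) which is
  timelike; the time orientation of the tangents is consistent along the curve
  (all future directed or all past directed).\<close>

definition kasner_timelike_curve ::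
  "('n::finite \<Rightarrow> real) \<Rightarrow> real set \<Rightarrow> (real \<Rightarrow> real) \<Rightarrow> (real \<Rightarrow> real^'n) \<Rightarrow> bool" where
  "kasner_timelike_curve p I gt gx \<longleftrightarrow>
     is_interval I \<and>
     (\<forall>s\<in>I. 0 < gt s) \<and>
     continuous_on I gt \<and> continuous_on I gx \<and>
     (\<exists>S vt vx. finite S \<and>
        continuous_on (I - S) vt \<and> continuous_on (I - S) vx \<and>
        (\<exists>\<sigma>::real. (\<sigma> = 1 \<or> \<sigma> = -1) \<and>
          (\<forall>s\<in>I - S.
             (gt has_real_derivative vt s) (at s within I) \<and>
             (gx has_vector_derivative vx s) (at s within I) \<and>
             kasner_timelike p (gt s) (vt s) (vx s) \<and>
             0 < \<sigma> * vt s)))"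

end

theory Submission
  imports Defs
begin

text \<open>Along an axis with exponent \<open>q < 1\<close> a timelike tangent satisfies \<open>|dx/dt| < t\<^sup>-\<^sup>q\<close>, so with
  \<open>h = horizon q\<close>, the primitive of \<open>t\<^sup>-\<^sup>q\<close> vanishing at the singularity, both \<open>\<sigma> h(t) + x\<close> and
  \<open>\<sigma> h(t) - x\<close> are nondecreasing along the curve (\<open>\<sigma>\<close> its time orientation). Hence the coordinate
  displacement between two instants is at most \<open>|h(t\<^sub>1) - h(t\<^sub>2)|\<close>, which is small once both
  times are, as \<open>h \<ge> 0\<close> tends to \<open>0\<close> at \<open>t = 0\<close>.\<close>

lemma DERIV_nonneg_imp_nondecreasing_off_finite:
  fixes f :: "real \<Rightarrow> real"
  assumes I: "is_interval I" and cont: "continuous_on I f" and S: "finite S"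
    and deriv: "\<And>x. x \<in> I - S \<Longrightarrow> (f has_real_derivative f' x) (at x within I)"
    and nonneg: "\<And>x. x \<in> I - S \<Longrightarrow> 0 \<le> f' x"
    and a: "a \<in> I" and b: "b \<in> I" and ab: "a \<le> b"
  shows "f a \<le> f b"
proof -
  have sub: "{a..b} \<subseteq> I"
    using I a b by (metis atLeastAtMost_iff is_interval_1 subsetI)
  define g where "g x = (if x \<in> {a<..<b} - S then f' x else 0)" for x
  have "(g has_integral (f b - f a)) {a..b}"
  proof (rule fundamental_theorem_of_calculus_interior_strong[OF S ab])
    fix x assume x: "x \<in> {a<..<b} - S"
    then have "x \<in> interior {a..b}"
      by simp
    then have "x \<in> interior I"
      using sub interior_mono by blast
    moreover have "x \<in> I - S"
      using x sub by auto
    ultimately have "(f has_real_derivative f' x) (at x)"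
      using deriv at_within_interior by metis
    then show "(f has_vector_derivative g x) (at x)"
      using x by (simp add: g_def has_real_derivative_iff_has_vector_derivative)
  next
    show "continuous_on {a..b} f"
      using cont sub continuous_on_subset by blast
  qed
  moreover have "0 \<le> g x" for x
    using nonneg[of x] sub by (simp add: g_def subset_iff)
  ultimately have "0 \<le> f b - f a"
    by (rule has_integral_nonneg)
  then show ?thesis
    by simp
qed

lemma exponent_less_one_if_negative_exponent:
  fixes p :: "'a::finite \<Rightarrow> real"
  assumes squares: "(\<Sum>j\<in>UNIV. (p j)^2) = 1" and neg: "p k < 0"
  shows "p i < 1"
proof (rule ccontr)
  assume "\<not> p i < 1"
  then have "1 \<le> (p i)^2" and "i \<noteq> k"
    using neg by (auto simp: one_le_power)
  moreover have "(p i)^2 + (p k)^2 \<le> (\<Sum>j\<in>UNIV. (p j)^2)"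
    using sum_mono2[of UNIV "{i, k}" "\<lambda>j. (p j)^2"] \<open>i \<noteq> k\<close> by simp
  moreover have "0 < (p k)^2"
    using neg by simp
  ultimately show False
    using squares by linarith
qed

lemma kasner_timelike_spatial_speed_bound:
  fixes p :: "'n::finite \<Rightarrow> real"
  assumes timelike: "kasner_timelike p t v0 v" and t: "0 < t"
  shows "\<bar>v $ i\<bar> < t powr (- p i) * \<bar>v0\<bar>"
proof -
  have "(t powr p i * \<bar>v $ i\<bar>)^2 = t powr (2 * p i) * (v $ i)^2"
    by (simp add: power2_eq_square powr_add[symmetric] mult_ac)
  also have "\<dots> \<le> (\<Sum>j\<in>UNIV. t powr (2 * p j) * (v $ j)^2)"
    by (rule member_le_sum) auto
  also have "\<dots> < \<bar>v0\<bar>^2"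
    using timelike by (simp add: kasner_timelike_def kasner_g_def)
  finally have "t powr p i * \<bar>v $ i\<bar> < \<bar>v0\<bar>"
    by (rule power2_less_imp_less) simp
  then show ?thesis
    using t by (simp add: powr_minus_divide field_simps)
qed

text \<open>The comoving particle horizon: the coordinate distance light travels along an axis with
  exponent \<open>q\<close> between the singularity and time \<open>t\<close>.\<close>

definition horizon :: "real \<Rightarrow> real \<Rightarrow> real" where
  "horizon q t = t powr (1 - q) / (1 - q)"

lemma has_real_derivative_horizon:
  assumes "q < 1" and "0 < t"
  shows "(horizon q has_real_derivative t powr (- q)) (at t)"
proof -
  have "((\<lambda>t. t powr (1 - q)) has_real_derivative (1 - q) * t powr (1 - q - 1)) (at t)"
    using assms by (intro has_real_derivative_powr) auto
  then have "(horizon q has_real_derivative (1 - q) * t powr (1 - q - 1) / (1 - q)) (at t)"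
    unfolding horizon_def by (rule DERIV_cdivide)
  then show ?thesis
    using assms by simp
qed

lemma horizon_nonneg: "q < 1 \<Longrightarrow> 0 \<le> horizon q t"
  by (simp add: horizon_def)

lemma horizon_tendsto_zero: "q < 1 \<Longrightarrow> (horizon q \<longlongrightarrow> 0) (at_right 0)"
  unfolding horizon_def
  by (auto intro!: tendsto_eq_intros tendsto_zero_powrI eventually_at_rightI[of 0 1])

lemma horizon_small_near_zero:
  fixes p :: "'a::finite \<Rightarrow> real"
  assumes "\<And>i. p i < 1" and "0 < \<epsilon>"
  shows "\<exists>T>0. \<forall>i. \<forall>t\<in>{0<..T}. horizon (p i) t < \<epsilon>"
proof -
  have "\<forall>\<^sub>F t in at_right 0. \<forall>i. horizon (p i) t < \<epsilon>"
    using horizon_tendsto_zero[OF assms(1)] assms(2) by (intro eventually_all_finite order_tendstoD)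
  then obtain b where "0 < b" and "\<And>t i. 0 < t \<Longrightarrow> t < b \<Longrightarrow> horizon (p i) t < \<epsilon>"
    by (auto simp: eventually_at_right_field)
  then show ?thesis
    by (intro exI[of _ "b / 2"]) auto
qed

lemma kasner_timelike_curve_coordinate_increment:
  fixes p :: "'n::finite \<Rightarrow> real"
  assumes q: "p i < 1" and curve: "kasner_timelike_curve p I gt gx"
    and s: "s \<in> I" and s': "s' \<in> I" and ss': "s \<le> s'"
  shows "\<bar>gx s' $ i - gx s $ i\<bar> \<le> \<bar>horizon (p i) (gt s') - horizon (p i) (gt s)\<bar>"
proof -
  let ?h = "\<lambda>s. horizon (p i) (gt s)"
  from curve obtain S vt vx \<sigma> where I: "is_interval I" and pos: "\<forall>s\<in>I. 0 < gt s"
    and cont: "continuous_on I gt" "continuous_on I gx" and S: "finite S"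
    and \<sigma>: "\<sigma> = 1 \<or> \<sigma> = -1"
    and tangent: "\<forall>s\<in>I - S. (gt has_real_derivative vt s) (at s within I) \<and>
       (gx has_vector_derivative vx s) (at s within I) \<and>
       kasner_timelike p (gt s) (vt s) (vx s) \<and> 0 < \<sigma> * vt s"
    unfolding kasner_timelike_curve_def by blast
  have "\<sigma> * ?h s + c * gx s $ i \<le> \<sigma> * ?h s' + c * gx s' $ i" if c: "c \<in> {1, -1}" for c
  proof (rule DERIV_nonneg_imp_nondecreasing_off_finite[OF I _ S _ _ s s' ss'])
    show "continuous_on I (\<lambda>s. \<sigma> * ?h s + c * gx s $ i)"
      unfolding horizon_def using pos q
      by (intro continuous_intros cont) auto
  next
    fix x assume "x \<in> I - S"
    then have t: "0 < gt x"
      and dt: "(gt has_real_derivative vt x) (at x within I)"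
      and dx: "(gx has_vector_derivative vx x) (at x within I)"
      and timelike: "kasner_timelike p (gt x) (vt x) (vx x)" and oriented: "0 < \<sigma> * vt x"
      using pos tangent by auto
    have "((\<lambda>s. gx s $ i) has_real_derivative vx x $ i) (at x within I)"
      unfolding has_real_derivative_iff_has_vector_derivative
      using bounded_linear.has_vector_derivative[OF bounded_linear_vec_nth dx] .
    moreover have "(?h has_real_derivative gt x powr (- p i) * vt x) (at x within I)"
      using DERIV_chain2[OF has_real_derivative_horizon[OF q t] dt] by simp
    ultimately show "((\<lambda>s. \<sigma> * ?h s + c * gx s $ i) has_real_derivative
        \<sigma> * (gt x powr (- p i) * vt x) + c * vx x $ i) (at x within I)"
      by (intro DERIV_add DERIV_cmult)
    have "\<bar>vx x $ i\<bar> < gt x powr (- p i) * \<bar>vt x\<bar>"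
      using kasner_timelike_spatial_speed_bound[OF timelike t] .
    moreover have "\<sigma> * (gt x powr (- p i) * vt x) = gt x powr (- p i) * \<bar>vt x\<bar>"
      using \<sigma> oriented by auto
    moreover have "- \<bar>vx x $ i\<bar> \<le> c * vx x $ i"
      using c by auto
    ultimately show "0 \<le> \<sigma> * (gt x powr (- p i) * vt x) + c * vx x $ i"
      by linarith
  qed
  from this[of 1] this[of "-1"] have "\<bar>gx s' $ i - gx s $ i\<bar> \<le> \<sigma> * (?h s' - ?h s)"
    by (simp add: algebra_simps abs_le_iff)
  then show ?thesis
    using \<sigma> by auto
qed

lemma kasner_timelike_curve_coordinate_dist:
  fixes p :: "'n::finite \<Rightarrow> real"
  assumes "p i < 1" and "kasner_timelike_curve p I gt gx" and "s \<in> I" and "s' \<in> I"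
  shows "\<bar>gx s $ i - gx s' $ i\<bar> \<le> \<bar>horizon (p i) (gt s) - horizon (p i) (gt s')\<bar>"
  using kasner_timelike_curve_coordinate_increment[OF assms]
    kasner_timelike_curve_coordinate_increment[OF assms(1,2,4,3)]
  by (cases "s \<le> s'") (auto simp: abs_minus_commute)

lemma kasner_timelike_curve_coordinate_dist_less:
  fixes p :: "'n::finite \<Rightarrow> real"
  assumes q: "p i < 1" and "kasner_timelike_curve p I gt gx" and "s \<in> I" and "s' \<in> I"
    and "horizon (p i) (gt s) < \<epsilon>" and "horizon (p i) (gt s') < \<epsilon>"
  shows "\<bar>gx s $ i - gx s' $ i\<bar> < \<epsilon>"
  using kasner_timelike_curve_coordinate_dist[OF assms(1-4)] assms(5,6)
    horizon_nonneg[OF q, of "gt s"] horizon_nonneg[OF q, of "gt s'"]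
  by linarith

theorem lemma3p6:
  fixes p :: "'n::finite \<Rightarrow> real"
  assumes "CARD('n) \<ge> 3"
    and "(\<Sum>i\<in>UNIV. p i) = 1"
    and "(\<Sum>i\<in>UNIV. (p i)^2) = 1"
    and "\<exists>i. p i < 0"
  shows "\<forall>\<epsilon>>0. \<exists>T>0. \<forall>(I::real set) gt (gx::real \<Rightarrow> real^'n).
           kasner_timelike_curve p I gt gx \<and> (\<exists>s0\<in>I. gt s0 < T) \<longrightarrow>
           (\<forall>i. \<forall>s\<in>I. \<forall>s'\<in>I. gt s \<in> {0<..T} \<and> gt s' \<in> {0<..T} \<longrightarrow>
              \<bar>gx s $ i - gx s' $ i\<bar> < \<epsilon>)"
proof (intro allI impI)
  fix \<epsilon> :: real assume "0 < \<epsilon>"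
  have q: "p i < 1" for i
    using assms(3,4) exponent_less_one_if_negative_exponent by blast
  then obtain T where "0 < T" and small: "\<forall>i. \<forall>t\<in>{0<..T}. horizon (p i) t < \<epsilon>"
    using horizon_small_near_zero \<open>0 < \<epsilon>\<close> by blast
  show "\<exists>T>0. \<forall>(I::real set) gt (gx::real \<Rightarrow> real^'n).
      kasner_timelike_curve p I gt gx \<and> (\<exists>s0\<in>I. gt s0 < T) \<longrightarrow>
      (\<forall>i. \<forall>s\<in>I. \<forall>s'\<in>I. gt s \<in> {0<..T} \<and> gt s' \<in> {0<..T} \<longrightarrow>
         \<bar>gx s $ i - gx s' $ i\<bar> < \<epsilon>)"
  proof (intro exI[of _ T] conjI allI impI ballI \<open>0 < T\<close>)
    fix I gt i s s' and gx :: "real \<Rightarrow> real^'n"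
    assume curve: "kasner_timelike_curve p I gt gx \<and> (\<exists>s0\<in>I. gt s0 < T)"
      and s: "s \<in> I" and s': "s' \<in> I" and times: "gt s \<in> {0<..T} \<and> gt s' \<in> {0<..T}"
    show "\<bar>gx s $ i - gx s' $ i\<bar> < \<epsilon>"
    proof (rule kasner_timelike_curve_coordinate_dist_less[where p = p and i = i,
          OF q conjunct1[OF curve] s s'])
      show "horizon (p i) (gt s) < \<epsilon>" and "horizon (p i) (gt s') < \<epsilon>"
        using small times by simp_all
    qed
  qed
qed

end
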